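(* Fix $\vartheta_1\in(0,\pi/2)$. The function $\Phi$ is increasing on $[\vartheta_1,\pi-\vartheta_1]$, and $\Phi(\pi-\vartheta_1)=\pi$.
   Context: For $\eta\in[\vartheta_1,\pi-\vartheta_1]$ set $\gamma(\eta)=\sqrt{1-\sin^2\vartheta_1/\sin^2\eta}$ and $\Phi(\eta)=-\eta\,\gamma(\eta)+\arccos\big(\cos\eta/\cos\vartheta_1\big)$ with $\arccos\in[0,\pi]$. *)

theory Defs
  imports "HOL-Analysis.Analysis"
begin

definition gamma_fn :: "real \<Rightarrow> real \<Rightarrow> real" where
  "gamma_fn \<theta>\<^sub>1 \<eta> = sqrt (1 - (sin \<theta>\<^sub>1)\<^sup>2 / (sin \<eta>)\<^sup>2)"

definition Phi_fn :: "real \<Rightarrow> real \<Rightarrow> real" where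
  "Phi_fn \<theta>\<^sub>1 \<eta> = - \<eta> * gamma_fn \<theta>\<^sub>1 \<eta> + arccos (cos \<eta> / cos \<theta>\<^sub>1)"

end

theory Submission
  imports Defs
begin

text \<open>On the interior of the interval, \<open>\<Phi>' = sin\<^sup>2\<vartheta>\<^sub>1 (sin \<eta> - \<eta> cos \<eta>) / (sin\<^sup>2\<eta> \<surd>(sin\<^sup>2\<eta> - sin\<^sup>2\<vartheta>\<^sub>1))\<close>,
  and \<open>sin \<eta> - \<eta> cos \<eta>\<close> is positive on \<open>(0, \<pi>)\<close> because it vanishes at \<open>0\<close> and has
  derivative \<open>\<eta> sin \<eta>\<close>. At \<open>\<eta> = \<pi> - \<vartheta>\<^sub>1\<close> the factor \<open>\<gamma>\<close> vanishes and the arccosine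
  term equals \<open>arccos (-1) = \<pi>\<close>.\<close>

lemma strict_mono_on_atLeastAtMost_if_DERIV_pos:
  fixes f :: "real \<Rightarrow> real"
  assumes "continuous_on {a..b} f"
    and "\<And>x. a < x \<Longrightarrow> x < b \<Longrightarrow> \<exists>d. (f has_real_derivative d) (at x) \<and> 0 < d"
  shows "strict_mono_on {a..b} f"
proof (rule strict_mono_onI)
  fix x y assume xy: "x \<in> {a..b}" "y \<in> {a..b}" "x < y"
  show "f x < f y"
  proof (rule DERIV_pos_imp_increasing_open[OF \<open>x < y\<close>])
    show "continuous_on {x..y} f"
      using xy by (auto intro: continuous_on_subset[OF assms(1)])
  qed (use xy assms(2) in auto)
qed

lemma sin_minus_mult_cos_pos:
  fixes x :: real
  assumes "0 < x" "x < pi"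
  shows "0 < sin x - x * cos x"
proof -
  have "(\<lambda>t. sin t - t * cos t) 0 < (\<lambda>t. sin t - t * cos t) x"
  proof (rule DERIV_pos_imp_increasing_open[OF assms(1)])
    fix y :: real assume y: "0 < y" "y < x"
    have "((\<lambda>t. sin t - t * cos t) has_real_derivative y * sin y) (at y)"
      by (rule derivative_eq_intros refl | simp)+
    moreover have "0 < y * sin y" using y assms sin_gt_zero by simp
    ultimately show "\<exists>d. ((\<lambda>t. sin t - t * cos t) has_real_derivative d) (at y) \<and> 0 < d"
      by blast
  qed (intro continuous_intros)
  then show ?thesis by simp
qed

lemma abs_cos_le_cos:
  fixes \<theta> x :: real
  assumes "0 \<le> \<theta>" "\<theta> \<le> x" "x \<le> pi - \<theta>"
  shows "\<bar>cos x\<bar> \<le> cos \<theta>"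
proof -
  have "cos x \<le> cos \<theta>" using assms by (intro cos_monotone_0_pi_le) auto
  moreover have "cos (pi - \<theta>) \<le> cos x" using assms by (intro cos_monotone_0_pi_le) auto
  ultimately show ?thesis by simp
qed

lemma abs_cos_less_cos:
  fixes \<theta> x :: real
  assumes "0 \<le> \<theta>" "\<theta> < x" "x < pi - \<theta>"
  shows "\<bar>cos x\<bar> < cos \<theta>"
proof -
  have "cos x < cos \<theta>" using assms by (intro cos_monotone_0_pi) auto
  moreover have "cos (pi - \<theta>) < cos x" using assms by (intro cos_monotone_0_pi) auto
  ultimately show ?thesis by simp
qed

lemma sin_power2_less_if_abs_cos_less:
  fixes x y :: real
  assumes "\<bar>cos x\<bar> < \<bar>cos y\<bar>"
  shows "(sin y)\<^sup>2 < (sin x)\<^sup>2"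
proof -
  have "(cos x)\<^sup>2 < (cos y)\<^sup>2" using assms by (simp add: abs_le_square_iff flip: not_le)
  then show ?thesis by (simp add: sin_squared_eq)
qed

lemma has_real_derivative_gamma_fn:
  assumes "sin x \<noteq> 0" "(sin \<theta>)\<^sup>2 < (sin x)\<^sup>2"
  shows "(gamma_fn \<theta> has_real_derivative
           (sin \<theta>)\<^sup>2 * cos x / (gamma_fn \<theta> x * sin x ^ 3)) (at x)"
proof -
  have radicand: "0 < 1 - (sin \<theta>)\<^sup>2 / (sin x)\<^sup>2" using assms by (simp add: field_simps)
  have "((\<lambda>y. 1 - (sin \<theta>)\<^sup>2 / (sin y)\<^sup>2) has_real_derivative
          2 * (sin \<theta>)\<^sup>2 * cos x / sin x ^ 3) (at x)"
    using assms(1)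
    by (auto intro!: derivative_eq_intros simp: field_simps eval_nat_numeral)
  from DERIV_chain2[OF DERIV_real_sqrt[OF radicand] this]
  show ?thesis
    unfolding gamma_fn_def using assms(1) by (simp add: field_simps)
qed

lemma has_real_derivative_arccos_cos_div:
  fixes c :: real
  assumes "0 < c" "\<bar>cos x\<bar> < c"
  shows "((\<lambda>y. arccos (cos y / c)) has_real_derivative
           sin x / (c * sqrt (1 - (cos x / c)\<^sup>2))) (at x)"
proof -
  have "-1 < cos x / c" "cos x / c < 1" using assms by (auto simp: divide_simps)
  from DERIV_chain2[OF DERIV_arccos[OF this] DERIV_cdivide[OF DERIV_cos, of c]]
  show ?thesis using assms(1) by (simp add: field_simps)
qed

lemma has_real_derivative_Phi_fn:
  fixes \<theta> x :: real
  assumes "0 < cos \<theta>" "0 < x" "x < pi" "\<bar>cos x\<bar> < cos \<theta>"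
  shows "(Phi_fn \<theta> has_real_derivative
           (sin \<theta>)\<^sup>2 * (sin x - x * cos x) / (sqrt ((sin x)\<^sup>2 - (sin \<theta>)\<^sup>2) * (sin x)\<^sup>2)) (at x)"
proof -
  define s S C r where "s = sin \<theta>" and "S = sin x" and "C = cos x"
    and "r = sqrt ((sin x)\<^sup>2 - (sin \<theta>)\<^sup>2)"
  have S0: "0 < S" unfolding S_def using assms by (intro sin_gt_zero)
  have pos: "s\<^sup>2 < S\<^sup>2"
    unfolding s_def S_def using assms(1,4) sin_power2_less_if_abs_cos_less[of x \<theta>] by simp
  then have r0: "0 < r" and r2: "r\<^sup>2 = S\<^sup>2 - s\<^sup>2"
    unfolding r_def s_def S_def by simp_all
  have gamma: "gamma_fn \<theta> x = r / S"
  proof -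
    have "1 - s\<^sup>2 / S\<^sup>2 = (r / S)\<^sup>2" using S0 r2 by (simp add: field_simps power_divide)
    then show ?thesis unfolding gamma_fn_def s_def[symmetric] S_def[symmetric]
      using r0 S0 by simp
  qed
  have arccos_root: "sqrt (1 - (C / cos \<theta>)\<^sup>2) = r / cos \<theta>"
  proof -
    have "1 - (C / cos \<theta>)\<^sup>2 = (r / cos \<theta>)\<^sup>2"
      using assms(1) r2 unfolding s_def S_def C_def
      by (simp add: field_simps power_divide sin_squared_eq)
    then show ?thesis using r0 assms(1) by simp
  qed
  have dgamma: "(gamma_fn \<theta> has_real_derivative s\<^sup>2 * C / (r / S * S ^ 3)) (at x)"
    using has_real_derivative_gamma_fn[of x \<theta>] S0 pos gamma unfolding s_def S_def C_def by simp
  have darccos: "((\<lambda>y. arccos (cos y / cos \<theta>)) has_real_derivative S / r) (at x)"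
    using has_real_derivative_arccos_cos_div[OF assms(1,4)] arccos_root assms(1)
    unfolding S_def C_def by simp
  have "((\<lambda>y. - y * gamma_fn \<theta> y) has_real_derivative
          (- 1) * gamma_fn \<theta> x + s\<^sup>2 * C / (r / S * S ^ 3) * (- x)) (at x)"
    by (rule DERIV_mult[OF DERIV_minus[OF DERIV_ident] dgamma])
  from DERIV_add[OF this darccos]
  have "(Phi_fn \<theta> has_real_derivative
          (- 1) * (r / S) + s\<^sup>2 * C / (r / S * S ^ 3) * (- x) + S / r) (at x)"
    unfolding Phi_fn_def[abs_def] gamma .
  also have "(- 1) * (r / S) + s\<^sup>2 * C / (r / S * S ^ 3) * (- x) + S / r
             = s\<^sup>2 * (S - x * C) / (r * S\<^sup>2)"
    using r0 S0 r2 by (simp add: field_simps power2_eq_square eval_nat_numeral) (metis distrib_left)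
  finally show ?thesis unfolding s_def S_def C_def r_def .
qed

lemma continuous_on_Phi_fn:
  fixes \<theta> :: real
  assumes "0 < \<theta>" "\<theta> < pi / 2"
  shows "continuous_on {\<theta>..pi - \<theta>} (Phi_fn \<theta>)"
proof -
  have "0 < cos \<theta>" using assms by (intro cos_gt_zero) auto
  moreover have "sin x \<noteq> 0" if "x \<in> {\<theta>..pi - \<theta>}" for x
    using that assms sin_gt_zero[of x] by auto
  moreover have "-1 \<le> cos x / cos \<theta> \<and> cos x / cos \<theta> \<le> 1" if "x \<in> {\<theta>..pi - \<theta>}" for x
    using that assms abs_cos_le_cos[of \<theta> x] \<open>0 < cos \<theta>\<close> by (auto simp: divide_simps)
  ultimately show ?thesis
    unfolding Phi_fn_def gamma_fn_def by (intro continuous_intros) auto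
qed

lemma Phi_fn_DERIV_pos:
  fixes \<theta> x :: real
  assumes "0 < \<theta>" "\<theta> < pi / 2" "\<theta> < x" "x < pi - \<theta>"
  shows "\<exists>d. (Phi_fn \<theta> has_real_derivative d) (at x) \<and> 0 < d"
proof -
  have cos_pos: "0 < cos \<theta>" and sin_pos: "0 < sin \<theta>"
    using assms by (auto intro: cos_gt_zero sin_gt_zero)
  have x: "0 < x" "x < pi" using assms by auto
  have abs_cos: "\<bar>cos x\<bar> < cos \<theta>" using assms by (intro abs_cos_less_cos) auto
  then have "(sin \<theta>)\<^sup>2 < (sin x)\<^sup>2"
    using cos_pos sin_power2_less_if_abs_cos_less[of x \<theta>] by simp
  moreover have "0 < sin x - x * cos x" using x by (rule sin_minus_mult_cos_pos)
  moreover have "0 < sin x" using x by (rule sin_gt_zero)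
  ultimately have "0 < (sin \<theta>)\<^sup>2 * (sin x - x * cos x)
                       / (sqrt ((sin x)\<^sup>2 - (sin \<theta>)\<^sup>2) * (sin x)\<^sup>2)"
    using sin_pos by simp
  with has_real_derivative_Phi_fn[OF cos_pos x abs_cos] show ?thesis by blast
qed

theorem corollary5p11:
  fixes \<theta>\<^sub>1 :: real
  assumes "0 < \<theta>\<^sub>1" and "\<theta>\<^sub>1 < pi / 2"
  shows "strict_mono_on {\<theta>\<^sub>1 .. pi - \<theta>\<^sub>1} (Phi_fn \<theta>\<^sub>1)
         \<and> Phi_fn \<theta>\<^sub>1 (pi - \<theta>\<^sub>1) = pi"
proof
  show "strict_mono_on {\<theta>\<^sub>1 .. pi - \<theta>\<^sub>1} (Phi_fn \<theta>\<^sub>1)"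
    using continuous_on_Phi_fn[OF assms] Phi_fn_DERIV_pos[OF assms]
    by (rule strict_mono_on_atLeastAtMost_if_DERIV_pos)
  have "0 < cos \<theta>\<^sub>1" "0 < sin \<theta>\<^sub>1"
    using assms by (auto intro: cos_gt_zero sin_gt_zero)
  then show "Phi_fn \<theta>\<^sub>1 (pi - \<theta>\<^sub>1) = pi"
    unfolding Phi_fn_def gamma_fn_def by simp
qed

end
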